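(* Let $\lambda_{\max}>1$, $\tau\in\mathbb{Z}_+$, $k_1\in(0,\lambda_{\max}-1]$ and $k_2\in(0,1]$, and consider the two-arrival policy $\lambda(q)=1+k_1$ for $0\le q<\tau$ and $\lambda(q)=1-k_2$ for $q\ge\tau$. Let $\pi$ be the stationary distribution of the associated queue-length chain and $\bar q\sim\pi$. Then $$\mathbb{E}[\bar q]\ge\frac{1}{\tau+\frac1{k_2}}\left(\frac{\tau(\tau-1)}{2}+\frac{\tau}{k_2}+\frac{1-k_2}{k_2^2}\right).$$
   Context: For a policy $\lambda:\mathbb{Z}_+\to[0,\lambda_{\max}]$, the queue-length chain is the continuous-time birth–death chain on $\mathbb{Z}_+$ with rate $\lambda(q)$ from $q$ to $q+1$ and rate $1$ from $q$ to $q-1$ ($q\ge1$), restricted to the states reachable from $0$. *)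

theory Defs
  imports Complex_Main
begin

text \<open>Queue-length chain of a policy lam: continuous-time birth-death chain on nat,
  rate lam q from q to q+1, rate 1 from q to q-1 (q >= 1).\<close>

definition qrate :: "(nat \<Rightarrow> real) \<Rightarrow> nat \<Rightarrow> nat \<Rightarrow> real" where
  "qrate lam i j = (if j = Suc i then lam i else if Suc j = i then 1 else 0)"

definition reachable_states :: "(nat \<Rightarrow> real) \<Rightarrow> nat set" where
  "reachable_states lam = {q. \<forall>i<q. lam i > 0}"

text \<open>Stationary distribution of the chain restricted to the reachable states:
  a probability distribution on the reachable states satisfying global balance
  (total inflow rate = total outflow rate) at every reachable state.\<close>
definition is_stationary_dist :: "(nat \<Rightarrow> real) \<Rightarrow> (nat \<Rightarrow> real) \<Rightarrow> bool" where
  "is_stationary_dist lam \<pi> \<longleftrightarrow>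
     (\<forall>q. 0 \<le> \<pi> q) \<and>
     (\<forall>q. q \<notin> reachable_states lam \<longrightarrow> \<pi> q = 0) \<and>
     \<pi> sums 1 \<and>
     (\<forall>j \<in> reachable_states lam.
        (\<Sum>i\<in>{j - 1, Suc j}. \<pi> i * qrate lam i j) =
        \<pi> j * (\<Sum>k\<in>{j - 1, Suc j} - {j}. qrate lam j k))"

definition two_arrival_policy :: "real \<Rightarrow> real \<Rightarrow> nat \<Rightarrow> nat \<Rightarrow> real" where
  "two_arrival_policy k1 k2 \<tau> q = (if q < \<tau> then 1 + k1 else 1 - k2)"

end

theory Submission
  imports Defs
begin

text \<open>Detailed balance gives \<open>\<pi> q = \<pi> 0 * a ^ min q \<tau> * b ^ (q - \<tau>)\<close> with \<open>a = 1 + k1\<close>,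
  \<open>b = 1 - k2\<close>. The right-hand side of the bound is exactly the mean of the distribution
  proportional to \<open>b ^ (q - \<tau>)\<close>, i.e. of the case \<open>k1 = 0\<close>. The stationary distribution
  reweights it by the nondecreasing factor \<open>a ^ min q \<tau>\<close>, and such a reweighting can only
  increase the mean.\<close>

lemma stationary_dist_detailed_balance:
  assumes "is_stationary_dist L \<pi>"
  shows "\<pi> (Suc n) = L n * \<pi> n"
proof (induction n)
  case 0
  have "0 \<in> reachable_states L" by (simp add: reachable_states_def)
  then have "(\<Sum>i\<in>{0 - 1, Suc 0}. \<pi> i * qrate L i 0) = \<pi> 0 * (\<Sum>k\<in>{0 - 1, Suc 0} - {0}. qrate L 0 k)"
    using assms unfolding is_stationary_dist_def by blast
  then show ?case by (simp add: qrate_def)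
next
  case (Suc n)
  show ?case
  proof (cases "Suc n \<in> reachable_states L")
    case True
    then have "(\<Sum>i\<in>{Suc n - 1, Suc (Suc n)}. \<pi> i * qrate L i (Suc n)) =
        \<pi> (Suc n) * (\<Sum>k\<in>{Suc n - 1, Suc (Suc n)} - {Suc n}. qrate L (Suc n) k)"
      using assms unfolding is_stationary_dist_def by blast
    then have "\<pi> n * L n + \<pi> (Suc (Suc n)) = \<pi> (Suc n) * (1 + L (Suc n))"
      by (simp add: qrate_def)
    then show ?thesis using Suc by (simp add: algebra_simps)
  next
    case False
    then have "Suc (Suc n) \<notin> reachable_states L"
      unfolding reachable_states_def using less_SucI by blast
    then show ?thesis using assms False unfolding is_stationary_dist_def by auto
  qed
qed

lemma stationary_dist_product_form:
  assumes "is_stationary_dist L \<pi>"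
  shows "\<pi> q = \<pi> 0 * (\<Prod>i<q. L i)"
  by (induction q) (simp_all add: stationary_dist_detailed_balance[OF assms])

lemma prod_two_arrival_policy:
  "(\<Prod>i<q. two_arrival_policy k1 k2 \<tau> i) = (1 + k1) ^ min q \<tau> * (1 - k2) ^ (q - \<tau>)"
proof (induction q)
  case (Suc q)
  then show ?case
    by (cases "q < \<tau>") (simp_all add: two_arrival_policy_def Suc_diff_le min_def)
qed simp

lemma stationary_dist_two_arrival_policy:
  assumes "is_stationary_dist (two_arrival_policy k1 k2 \<tau>) \<pi>"
  shows "\<pi> q = \<pi> 0 * ((1 + k1) ^ min q \<tau> * (1 - k2) ^ (q - \<tau>))"
  using stationary_dist_product_form[OF assms, of q] by (simp only: prod_two_arrival_policy)

lemma sum_lessThan_of_nat: "(\<Sum>i<n. real i) = real n * (real n - 1) / 2"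
  by (induction n) (auto simp: algebra_simps)

lemma power_diff_sums:
  fixes b :: real and t :: nat
  assumes "\<bar>b\<bar> < 1"
  shows "(\<lambda>q. b ^ (q - t)) sums (real t + 1 / (1 - b))"
proof -
  have "(\<lambda>i. b ^ (i + t - t)) sums (1 / (1 - b))"
    using geometric_sums[of b] assms by simp
  moreover have "(\<Sum>i<t. b ^ (i - t)) = real t" by simp
  ultimately show ?thesis
    using sums_iff_shift[of "\<lambda>q. b ^ (q - t)" t] by (simp add: add.commute)
qed

lemma of_nat_mult_power_diff_sums:
  fixes b :: real and t :: nat
  assumes "\<bar>b\<bar> < 1"
  shows "(\<lambda>q. real q * b ^ (q - t)) sums
           (real t * (real t - 1) / 2 + (real t - 1) / (1 - b) + 1 / (1 - b) ^ 2)"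
proof -
  have "(\<lambda>i. real (Suc i) * b ^ i + (real t - 1) * b ^ i) sums
          (1 / (1 - b) ^ 2 + (real t - 1) * (1 / (1 - b)))"
    using assms by (intro sums_add sums_mult geometric_sums geometric_deriv_sums) simp_all
  then have "(\<lambda>i. real (i + t) * b ^ (i + t - t)) sums ((real t - 1) / (1 - b) + 1 / (1 - b) ^ 2)"
    by (simp add: algebra_simps)
  moreover have "(\<Sum>i<t. real i * b ^ (i - t)) = real t * (real t - 1) / 2"
    using sum_lessThan_of_nat by simp
  ultimately have "(\<lambda>q. real q * b ^ (q - t)) sums
      ((real t - 1) / (1 - b) + 1 / (1 - b) ^ 2 + real t * (real t - 1) / 2)"
    using sums_iff_shift[of "\<lambda>q. real q * b ^ (q - t)" t] by (simp only:)
  then show ?thesis by (simp only: ac_simps)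
qed

lemma power_diff_centered_sums:
  fixes b :: real and t :: nat
  assumes "\<bar>b\<bar> < 1"
  defines "m \<equiv> (real t * (real t - 1) / 2 + (real t - 1) / (1 - b) + 1 / (1 - b) ^ 2) /
                (real t + 1 / (1 - b))"
  shows "(\<lambda>q. (real q - m) * b ^ (q - t)) sums 0"
proof -
  have "real t + 1 / (1 - b) > 0" using assms(1) by (simp add: add_nonneg_pos)
  then have "m * (real t + 1 / (1 - b)) =
      real t * (real t - 1) / 2 + (real t - 1) / (1 - b) + 1 / (1 - b) ^ 2"
    unfolding m_def by simp
  then have "(\<lambda>q. real q * b ^ (q - t) - m * b ^ (q - t)) sums 0"
    using sums_diff[OF of_nat_mult_power_diff_sums[OF assms(1), of t]
        sums_mult[OF power_diff_sums[OF assms(1), of t], of m]]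
    by simp
  then show ?thesis by (simp add: left_diff_distrib)
qed

text \<open>The one-sided comparison \<open>(q - c) * (f q - f \<lceil>c\<rceil>) \<ge> 0\<close> does the work.\<close>

lemma mean_le_mono_reweighted_mean:
  fixes f v :: "nat \<Rightarrow> real"
  assumes "mono f" and "\<And>q. 0 \<le> v q" and "(\<lambda>q. (real q - c) * v q) sums 0"
    and "summable (\<lambda>q. f q * v q)" and "summable (\<lambda>q. real q * (f q * v q))"
  shows "c * (\<Sum>q. f q * v q) \<le> (\<Sum>q. real q * (f q * v q))"
proof -
  define F where "F = f (nat \<lceil>c\<rceil>)"
  have "(real q - c) * (f q - F) \<ge> 0" for q
  proof (cases "c \<le> real q")
    case True
    then have "F \<le> f q" unfolding F_def by (intro monoD[OF \<open>mono f\<close>]) linarith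
    then show ?thesis using True by simp
  next
    case False
    then have "f q \<le> F" unfolding F_def by (intro monoD[OF \<open>mono f\<close>]) linarith
    then show ?thesis using False by (simp add: mult_nonpos_nonpos)
  qed
  then have "0 \<le> (real q - c) * (f q - F) * v q" for q
    using assms(2) by simp
  then have termwise: "F * ((real q - c) * v q) \<le> real q * (f q * v q) - c * (f q * v q)" for q
    by (simp add: algebra_simps)
  have "(\<lambda>q. F * ((real q - c) * v q)) sums (F * 0)"
    using assms(3) by (rule sums_mult)
  moreover have "(\<lambda>q. real q * (f q * v q) - c * (f q * v q)) sums
      ((\<Sum>q. real q * (f q * v q)) - c * (\<Sum>q. f q * v q))"
    using assms(4,5) by (intro sums_diff sums_mult summable_sums)
  ultimately have "F * 0 \<le> (\<Sum>q. real q * (f q * v q)) - c * (\<Sum>q. f q * v q)"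
    by (rule sums_le[OF termwise])
  then show ?thesis by simp
qed

lemma mono_reweighted_mean_ge:
  fixes p f v :: "nat \<Rightarrow> real"
  assumes "p sums 1" and "\<And>q. p q = C * (f q * v q)" and "0 \<le> C"
    and "mono f" and "\<And>q. \<bar>f q\<bar> \<le> M"
    and "\<And>q. 0 \<le> v q" and "summable v" and "summable (\<lambda>q. real q * v q)"
    and "(\<lambda>q. (real q - c) * v q) sums 0"
  shows "summable (\<lambda>q. real q * p q) \<and> c \<le> (\<Sum>q. real q * p q)"
proof -
  have bound: "norm (f q * x) \<le> M * x" if "0 \<le> x" for q x
    using assms(5)[of q] that by (simp add: abs_mult mult_right_mono)
  have "norm (f q * v q) \<le> M * v q" for q
    using bound assms(6) by blast
  then have fv: "summable (\<lambda>q. f q * v q)"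
    using assms(7) by (blast intro: summable_comparison_test' summable_mult)
  have "norm (real q * (f q * v q)) \<le> M * (real q * v q)" for q
    using bound[of "real q * v q" q] assms(6)[of q] by (simp add: mult.left_commute)
  then have qfv: "summable (\<lambda>q. real q * (f q * v q))"
    using assms(8) by (blast intro: summable_comparison_test' summable_mult)
  have "p sums (C * (\<Sum>q. f q * v q))"
    using sums_mult[OF summable_sums[OF fv], of C] by (simp only: assms(2)[symmetric])
  then have "C * (\<Sum>q. f q * v q) = 1"
    using \<open>p sums 1\<close> by (rule sums_unique2)
  then have "c = C * (c * (\<Sum>q. f q * v q))" by (simp add: mult.left_commute)
  also have "\<dots> \<le> C * (\<Sum>q. real q * (f q * v q))"
    using mean_le_mono_reweighted_mean[OF assms(4,6,9) fv qfv] assms(3) by (rule mult_left_mono)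
  finally have "c \<le> C * (\<Sum>q. real q * (f q * v q))" .
  moreover have "C * (real q * (f q * v q)) = real q * p q" for q
    by (simp only: assms(2)[of q] mult.left_commute)
  then have "(\<lambda>q. real q * p q) sums (C * (\<Sum>q. real q * (f q * v q)))"
    using sums_mult[OF summable_sums[OF qfv], of C] by (simp only:)
  ultimately show ?thesis by (simp add: sums_iff)
qed

theorem lemmaC4:
  fixes lmax k1 k2 :: real and \<tau> :: nat and \<pi> :: "nat \<Rightarrow> real"
  assumes "lmax > 1"
    and "0 < k1" "k1 \<le> lmax - 1"
    and "0 < k2" "k2 \<le> 1"
    and "is_stationary_dist (two_arrival_policy k1 k2 \<tau>) \<pi>"
  shows "summable (\<lambda>q. real q * \<pi> q) \<and>
         1 / (real \<tau> + 1 / k2) *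
           (real \<tau> * (real \<tau> - 1) / 2 + real \<tau> / k2 + (1 - k2) / k2 ^ 2)
         \<le> (\<Sum>q. real q * \<pi> q)"
proof -
  define f where "f q = (1 + k1) ^ min q \<tau>" for q
  define v where "v q = (1 - k2) ^ (q - \<tau>)" for q
  have ratio_lt_1: "\<bar>1 - k2\<bar> < 1" using assms(4,5) by simp
  have bound_eq: "real \<tau> / k2 + (1 - k2) / k2 ^ 2 = (real \<tau> - 1) / k2 + 1 / k2 ^ 2"
    using assms(4) by (simp add: field_simps power2_eq_square)
  have "\<pi> sums 1"
    using assms(6) unfolding is_stationary_dist_def by blast
  moreover have "\<pi> q = \<pi> 0 * (f q * v q)" for q
    unfolding f_def v_def by (rule stationary_dist_two_arrival_policy[OF assms(6)])
  moreover have "0 \<le> \<pi> 0"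
    using assms(6) unfolding is_stationary_dist_def by blast
  moreover have "mono f"
    unfolding f_def using assms(2) by (intro monoI power_increasing) auto
  moreover have "\<bar>f q\<bar> \<le> (1 + k1) ^ \<tau>" for q
    unfolding f_def using assms(2) by (simp add: power_increasing)
  moreover have "0 \<le> v q" for q
    unfolding v_def using assms(5) by simp
  moreover have "summable v" and "summable (\<lambda>q. real q * v q)"
    using power_diff_sums[OF ratio_lt_1] of_nat_mult_power_diff_sums[OF ratio_lt_1]
    by (auto simp: v_def[abs_def] sums_iff)
  moreover have "(\<lambda>q. (real q - 1 / (real \<tau> + 1 / k2) *
      (real \<tau> * (real \<tau> - 1) / 2 + real \<tau> / k2 + (1 - k2) / k2 ^ 2)) * v q) sums 0"
    using power_diff_centered_sums[OF ratio_lt_1, of \<tau>] bound_eq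
    by (simp add: v_def add.assoc)
  ultimately show ?thesis by (rule mono_reweighted_mean_ge)
qed

end
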